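(* Let $K$ be a simplicial complex, $X\cup Y=K_0$ a cover of its vertex set, $A:=X\cap Y$, and $P:=\{\sigma\in K\mid\sigma\subset X\text{ or }\sigma\subset Y\text{ or }\sigma\cap A\neq\emptyset\}$. Assume $\bigcap_{\sigma\in K_1\setminus P}\mathrm{St}(\sigma,A)\neq\emptyset$. Then the homotopy fibers of the inclusion $K_X\cup K_Y\subset K$ are connected.
   Context: A simplicial complex is a collection of finite nonempty subsets of a fixed set closed under taking nonempty subsets; $K_0$ is its vertex set and $K_1$ its set of 1-dimensional simplices (edges); $K_B$ is the subcomplex of simplices contained in $B$. $\mathrm{St}(\sigma,A):=\{\mu\subset A\mid 0<|\mu|<\infty,\ \mu\cup\sigma\in K\}$. Homotopical notions refer to geometric realizations. *)

theory Defs
  imports "HOL-Analysis.Analysis"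
begin

definition simplicial_complex :: "'v set set \<Rightarrow> bool" where
  "simplicial_complex K \<longleftrightarrow>
     (\<forall>\<sigma>\<in>K. finite \<sigma> \<and> \<sigma> \<noteq> {}) \<and>
     (\<forall>\<sigma>\<in>K. \<forall>\<tau>. \<tau> \<subseteq> \<sigma> \<and> \<tau> \<noteq> {} \<longrightarrow> \<tau> \<in> K)"

definition vertices :: "'v set set \<Rightarrow> 'v set" where
  "vertices K = {v. {v} \<in> K}"

definition edges :: "'v set set \<Rightarrow> 'v set set" where
  "edges K = {\<sigma>\<in>K. card \<sigma> = 2}"

definition full_subcomplex :: "'v set set \<Rightarrow> 'v set \<Rightarrow> 'v set set" where
  "full_subcomplex K B = {\<sigma>\<in>K. \<sigma> \<subseteq> B}"

definition St :: "'v set set \<Rightarrow> 'v set \<Rightarrow> 'v set \<Rightarrow> 'v set set" where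
  "St K \<sigma> A = {\<mu>. \<mu> \<subseteq> A \<and> finite \<mu> \<and> \<mu> \<noteq> {} \<and> \<mu> \<union> \<sigma> \<in> K}"

text \<open>Geometric realization: points are barycentric coordinate functions
'v \<Rightarrow> real supported on a simplex; each closed simplex carries the
Euclidean (product) topology and the realization carries the weak
(coherent) topology with respect to the closed simplices.\<close>
definition closed_simplex :: "'v set \<Rightarrow> ('v \<Rightarrow> real) set" where
  "closed_simplex \<sigma> =
     {\<alpha>. (\<forall>v. 0 \<le> \<alpha> v) \<and> (\<forall>v. v \<notin> \<sigma> \<longrightarrow> \<alpha> v = 0) \<and> (\<Sum>v\<in>\<sigma>. \<alpha> v) = 1}"

definition realization :: "'v set set \<Rightarrow> ('v \<Rightarrow> real) set" where
  "realization K = (\<Union>\<sigma>\<in>K. closed_simplex \<sigma>)"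

definition realization_top :: "'v set set \<Rightarrow> ('v \<Rightarrow> real) topology" where
  "realization_top K = topology (\<lambda>U. U \<subseteq> realization K \<and>
     (\<forall>\<sigma>\<in>K. openin (subtopology (powertop_real UNIV) (closed_simplex \<sigma>))
                    (U \<inter> closed_simplex \<sigma>)))"

text \<open>It is connected iff it is nonempty and path-connected in the
compact-open topology; by the exponential law for the locally compact
Hausdorff interval, a path between (z0,\<gamma>0) and (z1,\<gamma>1) is a path \<zeta> in S from
z0 to z1 together with a continuous H : [0,1]\<times>[0,1] \<rightarrow> T with
H(0,-)=\<gamma>0, H(1,-)=\<gamma>1, H(t,0)=f(\<zeta> t), H(t,1)=w.\<close>
definition hofiber :: "'a topology \<Rightarrow> 'b topology \<Rightarrow> ('a \<Rightarrow> 'b) \<Rightarrow> 'b \<Rightarrow> ('a \<times> (real \<Rightarrow> 'b)) set" where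
  "hofiber S T f w = {(z, \<gamma>). z \<in> topspace S \<and> pathin T \<gamma> \<and> \<gamma> 0 = f z \<and> \<gamma> 1 = w}"

definition hofiber_connected :: "'a topology \<Rightarrow> 'b topology \<Rightarrow> ('a \<Rightarrow> 'b) \<Rightarrow> 'b \<Rightarrow> bool" where
  "hofiber_connected S T f w \<longleftrightarrow>
     hofiber S T f w \<noteq> {} \<and>
     (\<forall>z0 \<gamma>0 z1 \<gamma>1. (z0, \<gamma>0) \<in> hofiber S T f w \<and> (z1, \<gamma>1) \<in> hofiber S T f w \<longrightarrow>
        (\<exists>\<zeta> H. pathin S \<zeta> \<and> \<zeta> 0 = z0 \<and> \<zeta> 1 = z1 \<and>
           continuous_map (prod_topology (top_of_set {0..1}) (top_of_set {0..1})) T H \<and>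
           (\<forall>s\<in>{0..1}. H (0, s) = \<gamma>0 s \<and> H (1, s) = \<gamma>1 s) \<and>
           (\<forall>t\<in>{0..1}. H (t, 0) = f (\<zeta> t) \<and> H (t, 1) = w)))"

end

theory Submission
  imports Defs
begin

text \<open>
  Let \<open>z\<^sub>0, z\<^sub>1\<close> be points of \<open>|K\<^sub>X \<union> K\<^sub>Y|\<close> joined to \<open>w\<close> by paths
  \<open>\<gamma>\<^sub>0, \<gamma>\<^sub>1\<close> in \<open>|K|\<close>, and let \<open>\<delta>\<close> be \<open>\<gamma>\<^sub>0\<close> followed by the reverse of \<open>\<gamma>\<^sub>1\<close>.
  A Lebesgue number argument gives vertices \<open>v\<^sub>0, \<dots>, v\<^sub>N\<close> such that \<open>v\<^sub>i\<close> and \<open>v\<^sub>i\<^sub>+\<^sub>1\<close>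
  lie in the support of \<open>\<delta>(u)\<close> for \<open>u \<in> [i/N, (i+1)/N]\<close>; hence \<open>\<delta>\<close> is straight-line
  homotopic in \<open>|K|\<close> to the edge path through the \<open>v\<^sub>i\<close>. An edge \<open>{v\<^sub>i, v\<^sub>i\<^sub>+\<^sub>1}\<close>
  outside \<open>K\<^sub>X \<union> K\<^sub>Y\<close> is a crossing edge; any vertex \<open>a\<close> of a simplex in the common
  star \<open>\<Inter> St(\<sigma>, A)\<close> lies in \<open>A = X \<inter> Y\<close> and spans a triangle of \<open>K\<close> with every
  crossing edge, so pushing each crossing edge across its triangle onto
  \<open>{v\<^sub>i, a} \<union> {a, v\<^sub>i\<^sub>+\<^sub>1}\<close> yields an edge path in \<open>|K\<^sub>X \<union> K\<^sub>Y|\<close>. The two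
  homotopies form a map of the unit square into \<open>|K|\<close> whose left side is \<open>\<delta>\<close> and
  whose other three sides lie in \<open>|K\<^sub>X \<union> K\<^sub>Y|\<close>; contracting the rim of the square
  onto the point where \<open>\<delta>\<close> passes through \<open>w\<close> connects \<open>(z\<^sub>0, \<gamma>\<^sub>0)\<close> and
  \<open>(z\<^sub>1, \<gamma>\<^sub>1)\<close> in the homotopy fibre.
\<close>

lemma pathin_joinpaths:
  assumes g1: "pathin X g1" and g2: "pathin X g2" and "g1 1 = g2 0"
  shows "pathin X (g1 +++ g2)"
proof -
  have "continuous_map (top_of_set {0..1/2}) (top_of_set {0..1}) (\<lambda>x::real. 2 * x)"
    "continuous_map (top_of_set {1/2..1}) (top_of_set {0..1}) (\<lambda>x::real. 2 * x - 1)"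
    by (auto intro!: continuous_intros)
  then have "continuous_map (top_of_set {0..1/2}) X (g1 \<circ> (\<lambda>x. 2 * x))"
    "continuous_map (top_of_set {1/2..1}) X (g2 \<circ> (\<lambda>x. 2 * x - 1))"
    using g1 g2 unfolding pathin_def by (metis continuous_map_compose)+
  moreover have "subtopology (top_of_set {0..1}) {x \<in> topspace (top_of_set {0..1}). x \<le> 1/2}
      = top_of_set {0..1/2::real}"
    "subtopology (top_of_set {0..1}) {x \<in> topspace (top_of_set {0..1}). 1/2 \<le> x}
      = top_of_set {1/2..1::real}"
    by (auto simp: subtopology_subtopology intro!: arg_cong[where f = "top_of_set"])
  moreover have "g1 (2 * x) = g2 (2 * x - 1)" if "x * 2 = 1" for x :: real
    using that \<open>g1 1 = g2 0\<close> by (simp add: mult.commute)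
  ultimately have "continuous_map (top_of_set {0..1}) X
      (\<lambda>x. if x \<le> 1/2 then g1 (2 * x) else g2 (2 * x - 1))"
    by (intro continuous_map_cases_le) (auto simp: o_def)
  then show ?thesis unfolding pathin_def joinpaths_def .
qed

lemma pathin_reversepath:
  assumes "pathin X g"
  shows "pathin X (reversepath g)"
proof -
  have "continuous_map (top_of_set {0..1}) (top_of_set {0..1}) (\<lambda>x::real. 1 - x)"
    by (auto intro!: continuous_intros)
  then have "continuous_map (top_of_set {0..1}) X (g \<circ> (\<lambda>x. 1 - x))"
    using assms unfolding pathin_def by (metis continuous_map_compose)
  then show ?thesis unfolding pathin_def reversepath_def by (simp add: o_def)
qed

section \<open>Simplicial complexes and their realizations\<close>

lemma simplicial_complex_face:
  "simplicial_complex K \<Longrightarrow> \<sigma> \<in> K \<Longrightarrow> \<tau> \<subseteq> \<sigma> \<Longrightarrow> \<tau> \<noteq> {} \<Longrightarrow> \<tau> \<in> K"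
  unfolding simplicial_complex_def by blast

lemma simplicial_complex_finite: "simplicial_complex K \<Longrightarrow> \<sigma> \<in> K \<Longrightarrow> finite \<sigma>"
  unfolding simplicial_complex_def by blast

lemma simplicial_complexI:
  assumes "\<And>\<sigma>. \<sigma> \<in> K \<Longrightarrow> finite \<sigma> \<and> \<sigma> \<noteq> {}"
    and "\<And>\<sigma> \<tau>. \<sigma> \<in> K \<Longrightarrow> \<tau> \<subseteq> \<sigma> \<Longrightarrow> \<tau> \<noteq> {} \<Longrightarrow> \<tau> \<in> K"
  shows "simplicial_complex K"
  using assms unfolding simplicial_complex_def by blast

lemma simplicial_complex_simplex:
  "simplicial_complex K \<Longrightarrow> \<sigma> \<in> K \<Longrightarrow> finite \<sigma> \<and> \<sigma> \<noteq> {}"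
  unfolding simplicial_complex_def by blast

lemma simplicial_complex_full_subcomplex:
  "simplicial_complex K \<Longrightarrow> simplicial_complex (full_subcomplex K B)"
  unfolding full_subcomplex_def
  by (rule simplicial_complexI) (auto dest: simplicial_complex_simplex intro: simplicial_complex_face)

lemma simplicial_complex_Un:
  "simplicial_complex K \<Longrightarrow> simplicial_complex L \<Longrightarrow> simplicial_complex (K \<union> L)"
  by (rule simplicial_complexI) (auto dest: simplicial_complex_simplex intro: simplicial_complex_face)

lemma openin_realization_top:
  "openin (realization_top K) U \<longleftrightarrow> U \<subseteq> realization K \<and>
     (\<forall>\<sigma>\<in>K. openin (top_of_set (closed_simplex \<sigma>)) (U \<inter> closed_simplex \<sigma>))"
proof -
  let ?P = "\<lambda>U. U \<subseteq> realization K \<and>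
     (\<forall>\<sigma>\<in>K. openin (top_of_set (closed_simplex \<sigma>)) (U \<inter> closed_simplex \<sigma>))"
  have "istopology ?P"
    unfolding istopology_def
  proof (rule conjI; intro allI impI)
    fix S T
    assume S: "?P S" and T: "?P T"
    show "?P (S \<inter> T)"
    proof (intro conjI ballI)
      show "S \<inter> T \<subseteq> realization K" using S by auto
      fix \<sigma>
      assume "\<sigma> \<in> K"
      then have "openin (top_of_set (closed_simplex \<sigma>)) ((S \<inter> closed_simplex \<sigma>) \<inter> (T \<inter> closed_simplex \<sigma>))"
        using S T by (metis openin_Int)
      then show "openin (top_of_set (closed_simplex \<sigma>)) (S \<inter> T \<inter> closed_simplex \<sigma>)"
        by (metis Int_assoc Int_left_commute Int_absorb)
    qed
  next
    fix \<S>
    assume opens: "\<forall>S\<in>\<S>. ?P S"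
    show "?P (\<Union>\<S>)"
    proof (intro conjI ballI)
      show "\<Union>\<S> \<subseteq> realization K" using opens by auto
      fix \<sigma>
      assume "\<sigma> \<in> K"
      then have "openin (top_of_set (closed_simplex \<sigma>)) (\<Union>S\<in>\<S>. S \<inter> closed_simplex \<sigma>)"
        using opens by (intro openin_Union) blast
      moreover have "(\<Union>S\<in>\<S>. S \<inter> closed_simplex \<sigma>) = \<Union>\<S> \<inter> closed_simplex \<sigma>" by blast
      ultimately show "openin (top_of_set (closed_simplex \<sigma>)) (\<Union>\<S> \<inter> closed_simplex \<sigma>)" by simp
    qed
  qed
  then show ?thesis
    unfolding realization_top_def euclidean_product_topology topology_inverse'[OF \<open>istopology ?P\<close>]
    by simp
qed

lemma closed_simplex_subset_realization: "\<sigma> \<in> K \<Longrightarrow> closed_simplex \<sigma> \<subseteq> realization K"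
  unfolding realization_def by auto

lemma topspace_realization_top: "topspace (realization_top K) = realization K"
proof -
  have "openin (realization_top K) (realization K)"
    unfolding openin_realization_top
  proof (intro conjI ballI)
    fix \<sigma>
    assume "\<sigma> \<in> K"
    then have "realization K \<inter> closed_simplex \<sigma> = topspace (top_of_set (closed_simplex \<sigma>))"
      using closed_simplex_subset_realization by auto
    then show "openin (top_of_set (closed_simplex \<sigma>)) (realization K \<inter> closed_simplex \<sigma>)"
      by (metis openin_topspace)
  qed auto
  moreover have "topspace (realization_top K) \<subseteq> realization K"
    using openin_topspace[of "realization_top K"] unfolding openin_realization_top by blast
  ultimately show ?thesis using openin_subset by blast
qed

lemma closedin_realization_top:
  "closedin (realization_top K) C \<longleftrightarrow> C \<subseteq> realization K \<and>
     (\<forall>\<sigma>\<in>K. closedin (top_of_set (closed_simplex \<sigma>)) (C \<inter> closed_simplex \<sigma>))"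
proof -
  have "(realization K - C) \<inter> closed_simplex \<sigma> = closed_simplex \<sigma> - C \<inter> closed_simplex \<sigma>"
    if "\<sigma> \<in> K" for \<sigma>
    using closed_simplex_subset_realization[OF that] by auto
  then show ?thesis
    unfolding closedin_def topspace_realization_top openin_realization_top
    by (auto simp: closedin_def)
qed

lemma closed_closed_simplex:
  fixes \<tau> :: "'v set"
  assumes "finite \<tau>"
  shows "closed (closed_simplex \<tau>)"
proof -
  have "closed {\<alpha>::'v\<Rightarrow>real. 0 \<le> \<alpha> v}" "closed {\<alpha>::'v\<Rightarrow>real. \<alpha> v = 0}" for v
    by (intro closed_Collect_le closed_Collect_eq continuous_intros; simp)+
  moreover have "closed {\<alpha>::'v\<Rightarrow>real. sum \<alpha> \<tau> = 1}"
    by (intro closed_Collect_eq continuous_intros continuous_on_sum) auto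
  ultimately have "closed ((\<Inter>v. {\<alpha>::'v\<Rightarrow>real. 0 \<le> \<alpha> v}) \<inter> (\<Inter>v\<in>-\<tau>. {\<alpha>. \<alpha> v = 0}) \<inter> {\<alpha>. sum \<alpha> \<tau> = 1})"
    by (intro closed_Int closed_INT) auto
  moreover have "closed_simplex \<tau> = (\<Inter>v. {\<alpha>::'v\<Rightarrow>real. 0 \<le> \<alpha> v}) \<inter> (\<Inter>v\<in>-\<tau>. {\<alpha>. \<alpha> v = 0}) \<inter> {\<alpha>. sum \<alpha> \<tau> = 1}"
    unfolding closed_simplex_def by auto
  ultimately show ?thesis by simp
qed

lemma continuous_map_realization_top_euclidean:
  fixes K :: "'v set set"
  shows "continuous_map (realization_top K) euclidean (\<lambda>x. x)"
  unfolding continuous_map_openin_preimage_eq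
proof (intro conjI allI impI)
  show "(\<lambda>x. x) \<in> topspace (realization_top K) \<rightarrow> topspace euclidean" by simp
  fix V :: "('v \<Rightarrow> real) set"
  assume "openin euclidean V"
  then have "openin (top_of_set (closed_simplex \<sigma>)) (realization K \<inter> V \<inter> closed_simplex \<sigma>)"
    if "\<sigma> \<in> K" for \<sigma>
  proof -
    have "realization K \<inter> V \<inter> closed_simplex \<sigma> = closed_simplex \<sigma> \<inter> V"
      using closed_simplex_subset_realization[OF that] by blast
    then show ?thesis using \<open>openin euclidean V\<close> by (simp add: openin_open_Int)
  qed
  then show "openin (realization_top K) (topspace (realization_top K) \<inter> (\<lambda>x. x) -` V)"
    by (simp add: openin_realization_top topspace_realization_top Int_def)
qed

lemma continuous_map_realization_top_coordinate:
  "continuous_map Z (realization_top K) f \<Longrightarrow> continuous_map Z euclideanreal (\<lambda>z. f z v)"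
  using continuous_map_compose[OF _ continuous_map_realization_top_euclidean, of Z K f]
    continuous_map_compose[of Z euclidean f euclideanreal "\<lambda>x. x v"]
  by (simp add: o_def)

lemma continuous_map_into_realization_top:
  fixes f :: "'a \<Rightarrow> 'v \<Rightarrow> real"
  assumes K: "simplicial_complex K" and F: "finite F" "F \<subseteq> K"
    and coord: "\<And>v. continuous_map Z euclideanreal (\<lambda>z. f z v)"
    and im: "\<And>z. z \<in> topspace Z \<Longrightarrow> \<exists>\<tau>\<in>F. f z \<in> closed_simplex \<tau>"
  shows "continuous_map Z (realization_top K) f"
  unfolding continuous_map_closedin
proof (intro conjI allI impI)
  have ce: "continuous_map Z euclidean f"
    using coord unfolding euclidean_product_topology[symmetric] continuous_map_componentwise_UNIV
    by blast
  show "f \<in> topspace Z \<rightarrow> topspace (realization_top K)"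
    using im F closed_simplex_subset_realization unfolding topspace_realization_top by blast
  fix C
  assume C: "closedin (realization_top K) C"
  have pieces: "closedin Z {x \<in> topspace Z. f x \<in> C \<inter> closed_simplex \<tau>}" if "\<tau> \<in> F" for \<tau>
  proof -
    have "closedin (top_of_set (closed_simplex \<tau>)) (C \<inter> closed_simplex \<tau>)"
      using C that F unfolding closedin_realization_top by blast
    moreover have "closed (closed_simplex \<tau>)"
      by (rule closed_closed_simplex[OF simplicial_complex_finite[OF K]]) (use that F in blast)
    ultimately have "closed (C \<inter> closed_simplex \<tau>)"
      using closedin_closed_trans by blast
    then have "closedin euclidean (C \<inter> closed_simplex \<tau>)" by simp
    then show ?thesis by (rule closedin_continuous_map_preimage[OF ce])
  qed
  have "{x \<in> topspace Z. f x \<in> C} = (\<Union>\<tau>\<in>F. {x \<in> topspace Z. f x \<in> C \<inter> closed_simplex \<tau>})"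
    using im by blast
  moreover have "closedin Z (\<Union>\<tau>\<in>F. {x \<in> topspace Z. f x \<in> C \<inter> closed_simplex \<tau>})"
    by (rule closedin_Union) (use F(1) pieces in auto)
  ultimately show "closedin Z {x \<in> topspace Z. f x \<in> C}" by (simp only:)
qed

definition supp :: "('v \<Rightarrow> real) \<Rightarrow> 'v set" where
  "supp \<alpha> = {v. \<alpha> v \<noteq> 0}"

lemma closed_simplex_supp:
  assumes \<alpha>: "\<alpha> \<in> closed_simplex \<sigma>" and "finite \<sigma>"
  shows "supp \<alpha> \<subseteq> \<sigma>" "supp \<alpha> \<noteq> {}" "\<alpha> \<in> closed_simplex (supp \<alpha>)"
proof -
  show sub: "supp \<alpha> \<subseteq> \<sigma>" using \<alpha> unfolding supp_def closed_simplex_def by auto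
  have "sum \<alpha> (supp \<alpha>) = sum \<alpha> \<sigma>"
    by (rule sum.mono_neutral_left[OF \<open>finite \<sigma>\<close> sub]) (auto simp: supp_def)
  also have "\<dots> = 1" using \<alpha> unfolding closed_simplex_def by auto
  finally have sum1: "sum \<alpha> (supp \<alpha>) = 1" .
  then show "supp \<alpha> \<noteq> {}" by auto
  show "\<alpha> \<in> closed_simplex (supp \<alpha>)"
    using \<alpha> sum1 unfolding closed_simplex_def by (auto simp: supp_def)
qed

lemma realization_supp:
  assumes K: "simplicial_complex K" and "\<alpha> \<in> realization K"
  shows "supp \<alpha> \<in> K" "\<alpha> \<in> closed_simplex (supp \<alpha>)"
proof -
  obtain \<sigma> where \<sigma>: "\<sigma> \<in> K" "\<alpha> \<in> closed_simplex \<sigma>"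
    using \<open>\<alpha> \<in> realization K\<close> unfolding realization_def by auto
  have "finite \<sigma>" using simplicial_complex_finite[OF K \<sigma>(1)] .
  show "supp \<alpha> \<in> K"
    using simplicial_complex_face[OF K \<sigma>(1) closed_simplex_supp(1,2)[OF \<sigma>(2) \<open>finite \<sigma>\<close>]] .
  show "\<alpha> \<in> closed_simplex (supp \<alpha>)"
    using closed_simplex_supp(3)[OF \<sigma>(2) \<open>finite \<sigma>\<close>] .
qed

lemma closedin_realization_top_if_finite_traces:
  fixes D :: "('v \<Rightarrow> real) set"
  assumes "D \<subseteq> realization K" and "\<And>\<sigma>. \<sigma> \<in> K \<Longrightarrow> finite (D \<inter> closed_simplex \<sigma>)"
  shows "closedin (realization_top K) D"
proof -
  have "Hausdorff_space (powertop_real (UNIV :: 'v set))"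
    unfolding Hausdorff_space_product_topology by simp
  then have "t1_space (euclidean :: ('v \<Rightarrow> real) topology)"
    unfolding euclidean_product_topology by (rule Hausdorff_imp_t1_space)
  then have "t1_space (top_of_set (closed_simplex \<sigma>))" for \<sigma> :: "'v set"
    by (rule t1_space_subtopology)
  then show ?thesis
    using assms by (simp add: closedin_realization_top t1_space_closedin_finite)
qed

text \<open>One point for each support gives a subset all of whose subsets are closed, so
  compactness allows only finitely many supports.\<close>
lemma finite_supp_compactin:
  assumes K: "simplicial_complex K" and C: "compactin (realization_top K) C"
  shows "finite (supp ` C)"
proof (rule ccontr)
  assume inf: "infinite (supp ` C)"
  have CR: "C \<subseteq> realization K"
    using compactin_subset_topspace[OF C] by (simp add: topspace_realization_top)
  obtain D where DC: "D \<subseteq> C" and inj: "inj_on supp D" and "supp ` C = supp ` D"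
    using subset_image_inj[of "supp ` C" supp C] by auto
  with inf have "infinite D" by (metis finite_imageI)
  have closed: "closedin (realization_top K) D'" if "D' \<subseteq> D" for D'
  proof (rule closedin_realization_top_if_finite_traces)
    show "D' \<subseteq> realization K" using that DC CR by blast
    fix \<sigma>
    assume "\<sigma> \<in> K"
    then have "finite \<sigma>" by (rule simplicial_complex_finite[OF K])
    have "supp ` (D' \<inter> closed_simplex \<sigma>) \<subseteq> Pow \<sigma>"
      using closed_simplex_supp(1)[OF _ \<open>finite \<sigma>\<close>] by blast
    then have "finite (supp ` (D' \<inter> closed_simplex \<sigma>))"
      by (rule finite_subset) (simp add: \<open>finite \<sigma>\<close>)
    moreover have "inj_on supp (D' \<inter> closed_simplex \<sigma>)"
      by (rule inj_on_subset[OF inj]) (use that in blast)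
    ultimately show "finite (D' \<inter> closed_simplex \<sigma>)" by (rule finite_imageD)
  qed
  obtain x where x: "x \<in> realization_top K derived_set_of D"
    using compactin_imp_Bolzano_Weierstrass[OF C, of D] \<open>infinite D\<close> DC by auto
  define U where "U = topspace (realization_top K) - (D - {x})"
  have "openin (realization_top K) U"
    using closed[of "D - {x}"] unfolding U_def by (simp add: closedin_def)
  moreover have "x \<in> U"
    using x unfolding U_def by (simp add: in_derived_set_of)
  ultimately have "\<exists>y. y \<noteq> x \<and> y \<in> D \<and> y \<in> U"
    using x unfolding in_derived_set_of by blast
  then show False unfolding U_def by auto
qed

section \<open>Edge paths\<close>

definition vertex_point :: "'v \<Rightarrow> 'v \<Rightarrow> real" where
  "vertex_point v = (\<lambda>x. if x = v then 1 else 0)"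

definition convex_comb :: "real \<Rightarrow> ('v \<Rightarrow> real) \<Rightarrow> ('v \<Rightarrow> real) \<Rightarrow> 'v \<Rightarrow> real" where
  "convex_comb l \<alpha> \<beta> = (\<lambda>x. (1 - l) * \<alpha> x + l * \<beta> x)"

lemma convex_comb_0 [simp]: "convex_comb 0 \<alpha> \<beta> = \<alpha>"
  and convex_comb_1 [simp]: "convex_comb 1 \<alpha> \<beta> = \<beta>"
  by (simp_all add: convex_comb_def)

lemma continuous_on_convex_comb [continuous_intros]:
  "continuous_on S l \<Longrightarrow> continuous_on S (\<lambda>z. \<alpha> z x) \<Longrightarrow> continuous_on S (\<lambda>z. \<beta> z x) \<Longrightarrow>
    continuous_on S (\<lambda>z. convex_comb (l z) (\<alpha> z) (\<beta> z) x)"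
  unfolding convex_comb_def by (intro continuous_intros)

lemma closed_simplex_convex_comb:
  assumes "\<alpha> \<in> closed_simplex \<tau>" "\<beta> \<in> closed_simplex \<tau>" "0 \<le> l" "l \<le> 1"
  shows "convex_comb l \<alpha> \<beta> \<in> closed_simplex \<tau>"
proof -
  have "(\<Sum>x\<in>\<tau>. (1 - l) * \<alpha> x + l * \<beta> x) = (1 - l) * sum \<alpha> \<tau> + l * sum \<beta> \<tau>"
    by (simp add: sum.distrib sum_distrib_left)
  then show ?thesis
    using assms unfolding closed_simplex_def convex_comb_def by auto
qed

lemma vertex_point_in_closed_simplex: "finite \<tau> \<Longrightarrow> v \<in> \<tau> \<Longrightarrow> vertex_point v \<in> closed_simplex \<tau>"
  unfolding closed_simplex_def vertex_point_def by auto

lemma unit_interval_segment: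
  assumes "0 < N" "u \<in> {0..1}"
  obtains i where "i < N" "real i \<le> real N * u" "real N * u \<le> real i + 1"
proof (cases "u = 1")
  case True
  then show ?thesis using assms by (intro that[of "N - 1"]) auto
next
  case False
  define i where "i = nat \<lfloor>real N * u\<rfloor>"
  have "0 \<le> real N * u" "real N * u < real N" using assms False by auto
  then have "i < N" "real i \<le> real N * u" "real N * u \<le> real i + 1"
    unfolding i_def by (simp_all add: nat_less_iff floor_less_iff)
  then show ?thesis by (rule that)
qed

text \<open>The piecewise linear path through the vertices \<open>w 0, \<dots>, w M\<close>, at \<open>w j\<close> at time \<open>j / M\<close>.\<close>
definition tent :: "nat \<Rightarrow> nat \<Rightarrow> real \<Rightarrow> real" where
  "tent M j u = max 0 (1 - \<bar>real M * u - real j\<bar>)"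

definition edge_path :: "nat \<Rightarrow> (nat \<Rightarrow> 'v) \<Rightarrow> real \<Rightarrow> 'v \<Rightarrow> real" where
  "edge_path M w u = (\<lambda>x. \<Sum>j\<le>M. tent M j u * vertex_point (w j) x)"

lemma continuous_on_edge_path [continuous_intros]:
  "continuous_on S g \<Longrightarrow> continuous_on S (\<lambda>z. edge_path M w (g z) x)"
  unfolding edge_path_def tent_def by (intro continuous_intros)

lemma edge_path_segment:
  assumes "j < M" "real j \<le> real M * u" "real M * u \<le> real j + 1"
  shows "edge_path M w u =
    convex_comb (real M * u - real j) (vertex_point (w j)) (vertex_point (w (Suc j)))"
proof
  fix x
  have "tent M k u = 0" if "k \<notin> {j, Suc j}" for k
  proof (cases "k < j")
    case True
    then have "real k + 1 \<le> real j" by linarith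
    then show ?thesis unfolding tent_def using assms by auto
  next
    case False
    with that have "real j + 2 \<le> real k" by auto
    then show ?thesis unfolding tent_def using assms by auto
  qed
  then have "edge_path M w u x = (\<Sum>k\<in>{j, Suc j}. tent M k u * vertex_point (w k) x)"
    unfolding edge_path_def by (intro sum.mono_neutral_right) (use assms in auto)
  also have "\<dots> = tent M j u * vertex_point (w j) x + tent M (Suc j) u * vertex_point (w (Suc j)) x"
    by simp
  also have "tent M j u = 1 - (real M * u - real j)"
    unfolding tent_def using assms by auto
  also have "tent M (Suc j) u = real M * u - real j"
    unfolding tent_def using assms by auto
  finally show "edge_path M w u x =
      convex_comb (real M * u - real j) (vertex_point (w j)) (vertex_point (w (Suc j))) x"
    unfolding convex_comb_def .
qed

lemma edge_path_in_closed_simplex: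
  assumes "j < M" "real j \<le> real M * u" "real M * u \<le> real j + 1"
    and "finite \<tau>" "w j \<in> \<tau>" "w (Suc j) \<in> \<tau>"
  shows "edge_path M w u \<in> closed_simplex \<tau>"
  unfolding edge_path_segment[OF assms(1-3)] using assms
  by (intro closed_simplex_convex_comb vertex_point_in_closed_simplex) auto

lemma edge_path_start: "0 < M \<Longrightarrow> edge_path M w 0 = vertex_point (w 0)"
  using edge_path_segment[of 0 M 0 w] by simp

lemma edge_path_end: "0 < M \<Longrightarrow> edge_path M w 1 = vertex_point (w M)"
  using edge_path_segment[of "M - 1" M 1 w] by (simp add: of_nat_diff)

lemma edge_path_double_in_closed_simplex:
  assumes "i < N" "real i \<le> real N * u" "real N * u \<le> real i + 1" "finite \<tau>"
    and "w (2 * i) \<in> \<tau>" "w (Suc (2 * i)) \<in> \<tau>" "w (Suc (Suc (2 * i))) \<in> \<tau>"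
  shows "edge_path (2 * N) w u \<in> closed_simplex \<tau>"
proof (cases "real (2 * N) * u \<le> real (2 * i) + 1")
  case True
  then show ?thesis using assms by (intro edge_path_in_closed_simplex[of "2 * i"]) auto
next
  case False
  then show ?thesis using assms by (intro edge_path_in_closed_simplex[of "Suc (2 * i)"]) auto
qed

section \<open>Simplicial approximation of paths\<close>

lemma uniform_nonvanishing_coordinate:
  fixes \<delta> :: "real \<Rightarrow> 'v \<Rightarrow> real"
  assumes cont: "\<And>v. continuous_on {0..1} (\<lambda>u. \<delta> u v)"
    and nz: "\<And>u. u \<in> {0..1} \<Longrightarrow> \<exists>v. \<delta> u v \<noteq> 0"
  obtains \<epsilon> where "0 < \<epsilon>"
    "\<And>x. x \<in> {0..1} \<Longrightarrow> \<exists>v. \<forall>u\<in>{0..1}. \<bar>u - x\<bar> < \<epsilon> \<longrightarrow> \<delta> u v \<noteq> 0"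
proof -
  define \<G> where "\<G> = {U. open U \<and> (\<exists>v. \<forall>u\<in>{0..1} \<inter> U. \<delta> u v \<noteq> 0)}"
  have cover: "{0..1} \<subseteq> \<Union>\<G>"
  proof
    fix u0 :: real
    assume u0: "u0 \<in> {0..1}"
    obtain v where v: "\<delta> u0 v \<noteq> 0" using nz[OF u0] by blast
    have "openin (top_of_set {0..1}) {u \<in> topspace (top_of_set {0..1}). \<delta> u v \<in> -{0}}"
      by (rule openin_continuous_map_preimage[of _ euclideanreal]) (use cont in auto)
    then obtain U where U: "open U" "{u \<in> {0..1}. \<delta> u v \<in> -{0}} = {0..1} \<inter> U"
      unfolding openin_open by auto
    then have "U \<in> \<G>" unfolding \<G>_def by auto
    moreover have "u0 \<in> U" using U(2) u0 v by auto
    ultimately show "u0 \<in> \<Union>\<G>" by auto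
  qed
  have "open G" if "G \<in> \<G>" for G using that unfolding \<G>_def by simp
  then obtain \<epsilon> where "0 < \<epsilon>" and \<epsilon>: "\<And>x. x \<in> {0..1} \<Longrightarrow> \<exists>G\<in>\<G>. ball x \<epsilon> \<subseteq> G"
    using Heine_Borel_lemma[OF compact_Icc cover] by blast
  show ?thesis
  proof (rule that[OF \<open>0 < \<epsilon>\<close>])
    fix x :: real
    assume "x \<in> {0..1}"
    then obtain G v where G: "ball x \<epsilon> \<subseteq> G" "\<forall>u\<in>{0..1} \<inter> G. \<delta> u v \<noteq> 0"
      using \<epsilon> unfolding \<G>_def by blast
    have "u \<in> ball x \<epsilon>" if "\<bar>u - x\<bar> < \<epsilon>" for u
      using that by (simp add: dist_real_def abs_minus_commute)
    then have "\<forall>u\<in>{0..1}. \<bar>u - x\<bar> < \<epsilon> \<longrightarrow> \<delta> u v \<noteq> 0"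
      using G by blast
    then show "\<exists>v. \<forall>u\<in>{0..1}. \<bar>u - x\<bar> < \<epsilon> \<longrightarrow> \<delta> u v \<noteq> 0" ..
  qed
qed

lemma vertex_chain_along_path:
  fixes \<delta> :: "real \<Rightarrow> 'v \<Rightarrow> real"
  assumes cont: "\<And>v. continuous_on {0..1} (\<lambda>u. \<delta> u v)"
    and nz: "\<And>u. u \<in> {0..1} \<Longrightarrow> \<exists>v. \<delta> u v \<noteq> 0"
  obtains N vs where "0 < N"
    "\<And>i u. i < N \<Longrightarrow> real i \<le> real N * u \<Longrightarrow> real N * u \<le> real i + 1 \<Longrightarrow>
       \<delta> u (vs i) \<noteq> 0 \<and> \<delta> u (vs (Suc i)) \<noteq> 0"
proof -
  obtain \<epsilon> where "0 < \<epsilon>"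
    and \<epsilon>: "\<And>x. x \<in> {0..1} \<Longrightarrow> \<exists>v. \<forall>u\<in>{0..1}. \<bar>u - x\<bar> < \<epsilon> \<longrightarrow> \<delta> u v \<noteq> 0"
    using uniform_nonvanishing_coordinate[OF cont nz] by blast
  obtain N :: nat where N: "1 / \<epsilon> < real N" using reals_Archimedean2 by blast
  have "0 < 1 / \<epsilon>" using \<open>0 < \<epsilon>\<close> by simp
  then have "0 < N" using N by linarith
  have N\<epsilon>: "1 / real N < \<epsilon>" using N \<open>0 < \<epsilon>\<close> \<open>0 < N\<close> by (simp add: divide_less_eq mult.commute)
  have "\<exists>v. \<forall>u\<in>{0..1}. \<bar>u - real i / real N\<bar> < \<epsilon> \<longrightarrow> \<delta> u v \<noteq> 0" if "i \<le> N" for i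
    using \<epsilon> that \<open>0 < N\<close> by simp
  then obtain vs where vs: "\<And>i u. i \<le> N \<Longrightarrow> u \<in> {0..1} \<Longrightarrow> \<bar>u - real i / real N\<bar> < \<epsilon> \<Longrightarrow> \<delta> u (vs i) \<noteq> 0"
    by metis
  show ?thesis
  proof (rule that[OF \<open>0 < N\<close>])
    fix i u
    assume i: "i < N" "real i \<le> real N * u" "real N * u \<le> real i + 1"
    have N0: "0 < real N" using \<open>0 < N\<close> by simp
    have "real i + 1 \<le> real N" using i(1) by linarith
    then have "0 \<le> real N * u" "real N * u \<le> real N * 1" using i by linarith+
    then have "u \<in> {0..1}" using N0 by (simp add: zero_le_mult_iff mult_le_cancel_left_pos)
    have "u - real i / real N = (real N * u - real i) / real N"
      "u - real (Suc i) / real N = (real N * u - real (Suc i)) / real N"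
      using N0 by (simp_all add: field_simps)
    moreover have "\<bar>real N * u - real i\<bar> \<le> 1" "\<bar>real N * u - real (Suc i)\<bar> \<le> 1"
      using i by auto
    ultimately have "\<bar>u - real i / real N\<bar> \<le> 1 / real N" "\<bar>u - real (Suc i) / real N\<bar> \<le> 1 / real N"
      using N0 by (simp_all add: divide_right_mono)
    then show "\<delta> u (vs i) \<noteq> 0 \<and> \<delta> u (vs (Suc i)) \<noteq> 0"
      using vs[of i u] vs[of "Suc i" u] i \<open>u \<in> {0..1}\<close> N\<epsilon> by auto
  qed
qed

definition crossing_edges :: "'v set set \<Rightarrow> 'v set \<Rightarrow> 'v set \<Rightarrow> 'v set set" where
  "crossing_edges K X Y = {\<sigma> \<in> edges K. \<not> (\<sigma> \<subseteq> X \<or> \<sigma> \<subseteq> Y \<or> \<sigma> \<inter> (X \<inter> Y) \<noteq> {})}"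

lemma crossing_edges_eq:
  "edges K - {\<sigma> \<in> K. \<sigma> \<subseteq> X \<or> \<sigma> \<subseteq> Y \<or> \<sigma> \<inter> (X \<inter> Y) \<noteq> {}} = crossing_edges K X Y"
  unfolding crossing_edges_def edges_def by auto

lemma common_star_vertex:
  assumes K: "simplicial_complex K" and "(\<Inter>\<sigma>\<in>crossing_edges K X Y. St K \<sigma> (X \<inter> Y)) \<noteq> {}"
  obtains a where "\<And>\<sigma>. \<sigma> \<in> crossing_edges K X Y \<Longrightarrow> a \<in> X \<inter> Y \<and> insert a \<sigma> \<in> K"
proof (cases "crossing_edges K X Y = {}")
  case True
  then show ?thesis by (intro that[of undefined]) auto
next
  case False
  then obtain \<sigma>0 where \<sigma>0: "\<sigma>0 \<in> crossing_edges K X Y" by blast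
  obtain \<mu> where \<mu>: "\<And>\<sigma>. \<sigma> \<in> crossing_edges K X Y \<Longrightarrow> \<mu> \<in> St K \<sigma> (X \<inter> Y)"
    using assms(2) by blast
  obtain a where "a \<in> \<mu>" "\<mu> \<subseteq> X \<inter> Y" using \<mu>[OF \<sigma>0] unfolding St_def by blast
  show ?thesis
  proof (rule that)
    fix \<sigma>
    assume "\<sigma> \<in> crossing_edges K X Y"
    then have "\<mu> \<union> \<sigma> \<in> K" using \<mu> unfolding St_def by blast
    then have "insert a \<sigma> \<in> K"
      by (rule simplicial_complex_face[OF K]) (use \<open>a \<in> \<mu>\<close> in auto)
    then show "a \<in> X \<inter> Y \<and> insert a \<sigma> \<in> K" using \<open>a \<in> \<mu>\<close> \<open>\<mu> \<subseteq> X \<inter> Y\<close> by blast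
  qed
qed

text \<open>A crossing edge is pushed across the triangle it spans with the common star
  vertex; every other edge already lies in \<open>K\<^sub>X \<union> K\<^sub>Y\<close>.\<close>
lemma subdivide_edge:
  fixes K :: "'v set set"
  assumes K: "simplicial_complex K" and XY: "X \<union> Y = vertices K"
    and a: "\<And>\<sigma>. \<sigma> \<in> crossing_edges K X Y \<Longrightarrow> a \<in> X \<inter> Y \<and> insert a \<sigma> \<in> K"
    and uv: "{u, v} \<in> K"
  obtains c where "{u, c, v} \<in> K"
    "{u, c} \<in> full_subcomplex K X \<union> full_subcomplex K Y"
    "{c, v} \<in> full_subcomplex K X \<union> full_subcomplex K Y"
proof -
  have in_L: "\<tau> \<in> full_subcomplex K X \<union> full_subcomplex K Y" if "\<tau> \<in> K" "\<tau> \<subseteq> X \<or> \<tau> \<subseteq> Y" for \<tau>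
    using that unfolding full_subcomplex_def by blast
  have "{u} \<in> K" "{v} \<in> K" using simplicial_complex_face[OF K uv] by auto
  then have uXY: "u \<in> X \<union> Y" and vXY: "v \<in> X \<union> Y" using XY unfolding vertices_def by auto
  show ?thesis
  proof (cases "{u, v} \<in> crossing_edges K X Y")
    case True
    then have "a \<in> X \<inter> Y" and uav: "{u, a, v} \<in> K" using a[OF True] by (auto simp: insert_commute)
    have "{u, a} \<in> K" "{a, v} \<in> K" using simplicial_complex_face[OF K uav] by auto
    then show ?thesis using uav uXY vXY \<open>a \<in> X \<inter> Y\<close> by (intro that[of a] in_L) auto
  next
    case False
    have "{u, v} \<subseteq> X \<or> {u, v} \<subseteq> Y"
    proof (cases "u = v")
      case True
      then show ?thesis using uXY by auto
    next
      case False
      then have "{u, v} \<in> edges K" using uv unfolding edges_def by auto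
      then show ?thesis
        using \<open>{u, v} \<notin> crossing_edges K X Y\<close> uXY vXY unfolding crossing_edges_def by auto
    qed
    moreover have "{u} \<in> K" using \<open>{u} \<in> K\<close> .
    ultimately show ?thesis using uv by (intro that[of u] in_L) auto
  qed
qed

section \<open>The homotopy\<close>

text \<open>Straight-line homotopy from \<open>\<delta>\<close> to \<open>e\<close> for \<open>s \<le> 1/2\<close>, then from \<open>e\<close> to \<open>e'\<close>.\<close>
definition two_stage_homotopy ::
    "(real \<Rightarrow> 'v \<Rightarrow> real) \<Rightarrow> (real \<Rightarrow> 'v \<Rightarrow> real) \<Rightarrow> (real \<Rightarrow> 'v \<Rightarrow> real) \<Rightarrow> real \<times> real \<Rightarrow> 'v \<Rightarrow> real"
  where "two_stage_homotopy \<delta> e e' =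
    (\<lambda>(s, u). convex_comb (max 0 (2 * s - 1)) (convex_comb (min 1 (2 * s)) (\<delta> u) (e u)) (e' u))"

lemma two_stage_homotopy_0 [simp]: "two_stage_homotopy \<delta> e e' (0, u) = \<delta> u"
  and two_stage_homotopy_1 [simp]: "two_stage_homotopy \<delta> e e' (1, u) = e' u"
  by (simp_all add: two_stage_homotopy_def)

lemma continuous_on_two_stage_homotopy:
  fixes \<delta> e e' :: "real \<Rightarrow> 'v \<Rightarrow> real"
  assumes "continuous_on {0..1} (\<lambda>u. \<delta> u x)" "continuous_on {0..1} (\<lambda>u. e u x)"
    "continuous_on {0..1} (\<lambda>u. e' u x)"
  shows "continuous_on ({0..1} \<times> {0..1}) (\<lambda>z. two_stage_homotopy \<delta> e e' z x)"
proof -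
  have snd: "continuous_on ({0..1} \<times> {0..1}) (\<lambda>z. f (snd z) x)"
    if "continuous_on {0..1} (\<lambda>u. f u x)" for f :: "real \<Rightarrow> 'v \<Rightarrow> real"
    by (rule continuous_on_compose2[OF that continuous_on_snd]) auto
  show ?thesis
    unfolding two_stage_homotopy_def case_prod_beta
    by (intro continuous_intros snd assms)
qed

lemma two_stage_homotopy_in_closed_simplex:
  assumes "s \<in> {0..1}" "\<delta> u \<in> closed_simplex \<tau>\<^sub>1" "e u \<in> closed_simplex \<tau>\<^sub>1"
    "e u \<in> closed_simplex \<tau>\<^sub>2" "e' u \<in> closed_simplex \<tau>\<^sub>2"
  shows "two_stage_homotopy \<delta> e e' (s, u) \<in> closed_simplex \<tau>\<^sub>1 \<union> closed_simplex \<tau>\<^sub>2"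
proof (cases "s \<le> 1/2")
  case True
  then have "two_stage_homotopy \<delta> e e' (s, u) = convex_comb (2 * s) (\<delta> u) (e u)"
    by (simp add: two_stage_homotopy_def)
  then show ?thesis using closed_simplex_convex_comb[OF assms(2,3)] assms(1) True by auto
next
  case False
  then have "two_stage_homotopy \<delta> e e' (s, u) = convex_comb (2 * s - 1) (e u) (e' u)"
    by (simp add: two_stage_homotopy_def)
  then show ?thesis using closed_simplex_convex_comb[OF assms(4,5)] assms(1) False by auto
qed

lemma two_stage_homotopy_at_vertex:
  assumes "s \<in> {0..1}" "\<delta> u \<in> closed_simplex \<tau>" "finite \<tau>" "v \<in> \<tau>"
    "e u = vertex_point v" "e' u = vertex_point v"
  shows "two_stage_homotopy \<delta> e e' (s, u) \<in> closed_simplex \<tau>"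
  using two_stage_homotopy_in_closed_simplex[of s \<delta> u \<tau> e \<tau> e']
    vertex_point_in_closed_simplex[OF assms(3,4)] assms
  by auto

text \<open>Runs from \<open>(0, 0)\<close> to \<open>(0, 1)\<close> through the other three sides of the unit square.\<close>
definition square_rim :: "real \<Rightarrow> real \<times> real" where
  "square_rim t = (min 1 (min (3 * t) (3 - 3 * t)), max 0 (min 1 (3 * t - 1)))"

lemma square_rim_0 [simp]: "square_rim 0 = (0, 0)"
  and square_rim_1 [simp]: "square_rim 1 = (0, 1)"
  by (simp_all add: square_rim_def)

lemma square_rim_sides:
  assumes "t \<in> {0..1}"
  shows "square_rim t \<in> {0..1} \<times> {0..1}"
    and "snd (square_rim t) = 0 \<or> fst (square_rim t) = 1 \<or> snd (square_rim t) = 1"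
  using assms by (auto simp: square_rim_def min_def max_def)

lemma continuous_on_square_rim [continuous_intros]:
  "continuous_on S f \<Longrightarrow> continuous_on S (\<lambda>x. square_rim (f x))"
  unfolding square_rim_def by (intro continuous_intros)

text \<open>The homotopy contracts the rim of the square linearly onto the midpoint
  \<open>(0, 1/2)\<close> of the left side, where \<open>G\<close> passes through \<open>\<gamma>0 1 = \<gamma>1 1\<close>.\<close>
lemma homotopy_from_square:
  fixes G :: "real \<times> real \<Rightarrow> 'v \<Rightarrow> real"
  assumes K: "simplicial_complex K" and L: "simplicial_complex L"
    and cont: "\<And>x. continuous_on ({0..1} \<times> {0..1}) (\<lambda>z. G z x)"
    and F: "finite F" "F \<subseteq> K" "\<And>z. z \<in> {0..1} \<times> {0..1} \<Longrightarrow> \<exists>\<tau>\<in>F. G z \<in> closed_simplex \<tau>"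
    and FL: "finite FL" "FL \<subseteq> L"
      "\<And>z. z \<in> {0..1} \<times> {0..1} \<Longrightarrow> snd z = 0 \<or> fst z = 1 \<or> snd z = 1 \<Longrightarrow>
         \<exists>\<tau>\<in>FL. G z \<in> closed_simplex \<tau>"
    and left0: "\<And>s. s \<in> {0..1} \<Longrightarrow> G (0, s / 2) = \<gamma>0 s"
    and left1: "\<And>s. s \<in> {0..1} \<Longrightarrow> G (0, 1 - s / 2) = \<gamma>1 s"
  shows "\<exists>\<zeta> H. pathin (realization_top L) \<zeta> \<and> \<zeta> 0 = \<gamma>0 0 \<and> \<zeta> 1 = \<gamma>1 0 \<and>
           continuous_map (prod_topology (top_of_set {0..1}) (top_of_set {0..1})) (realization_top K) H \<and>
           (\<forall>s\<in>{0..1}. H (0, s) = \<gamma>0 s \<and> H (1, s) = \<gamma>1 s) \<and>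
           (\<forall>t\<in>{0..1}. H (t, 0) = id (\<zeta> t) \<and> H (t, 1) = \<gamma>0 1)"
proof -
  define c where "c z = ((1 - snd z) * fst (square_rim (fst z)),
    (1 - snd z) * snd (square_rim (fst z)) + snd z / 2)" for z :: "real \<times> real"
  have c_square: "c z \<in> {0..1} \<times> {0..1}" if "z \<in> {0..1} \<times> {0..1}" for z
  proof -
    obtain t s where "z = (t, s)" by (cases z)
    with that have z: "z = (t, s)" "t \<in> {0..1}" "s \<in> {0..1}" by auto
    then have "fst (square_rim t) \<in> {0..1}" "snd (square_rim t) \<in> {0..1}"
      using square_rim_sides(1)[of t] by auto
    moreover have "0 \<le> 1 - s" "1 - s \<le> 1" using z by auto
    ultimately have "(1 - s) * fst (square_rim t) \<in> {0..1 - s}" "(1 - s) * snd (square_rim t) \<in> {0..1 - s}"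
      by (auto simp: mult_left_le)
    then show ?thesis unfolding c_def z using z by auto
  qed
  have "pathin (realization_top L) (G \<circ> square_rim)"
    unfolding pathin_def
  proof (rule continuous_map_into_realization_top[OF L FL(1,2)])
    fix x
    have "square_rim ` {0..1} \<subseteq> {0..1} \<times> {0..1}" using square_rim_sides(1) by blast
    moreover have "continuous_on {0..1} (\<lambda>t. square_rim t)" by (intro continuous_intros)
    ultimately have "continuous_on {0..1} (\<lambda>t. G (square_rim t) x)"
      using continuous_on_compose2[OF cont[of x]] by blast
    then show "continuous_map (top_of_set {0..1}) euclideanreal (\<lambda>t. (G \<circ> square_rim) t x)"
      by simp
  next
    fix t
    assume "t \<in> topspace (top_of_set {0..1::real})"
    then have "t \<in> {0..1}" by simp
    then show "\<exists>\<tau>\<in>FL. (G \<circ> square_rim) t \<in> closed_simplex \<tau>"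
      using FL(3)[OF square_rim_sides[OF \<open>t \<in> {0..1}\<close>]] by simp
  qed
  moreover have "continuous_map (prod_topology (top_of_set {0..1}) (top_of_set {0..1}))
      (realization_top K) (G \<circ> c)"
  proof (rule continuous_map_into_realization_top[OF K F(1,2)])
    fix x
    have "continuous_on ({0..1} \<times> {0..1}) c"
      unfolding c_def by (intro continuous_intros) auto
    moreover have "c ` ({0..1} \<times> {0..1}) \<subseteq> {0..1} \<times> {0..1}" using c_square by blast
    ultimately have "continuous_on ({0..1} \<times> {0..1}) (\<lambda>z. G (c z) x)"
      using continuous_on_compose2[OF cont[of x]] by blast
    then show "continuous_map (prod_topology (top_of_set {0..1}) (top_of_set {0..1})) euclideanreal
        (\<lambda>z. (G \<circ> c) z x)"
      by simp
  next
    fix z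
    assume "z \<in> topspace (prod_topology (top_of_set {0..1::real}) (top_of_set {0..1::real}))"
    then have "z \<in> {0..1} \<times> {0..1}" by simp
    then show "\<exists>\<tau>\<in>F. (G \<circ> c) z \<in> closed_simplex \<tau>" using F(3)[OF c_square] by simp
  qed
  moreover have "(G \<circ> c) (0, s) = \<gamma>0 s" "(G \<circ> c) (1, s) = \<gamma>1 s" if "s \<in> {0..1}" for s
  proof -
    have "(1 - s) + s / 2 = 1 - s / 2" by simp
    then show "(G \<circ> c) (0, s) = \<gamma>0 s" "(G \<circ> c) (1, s) = \<gamma>1 s"
      using left0[OF that] left1[OF that] by (simp_all add: c_def)
  qed
  moreover have "(G \<circ> c) (t, 1) = \<gamma>0 1" for t
    using left0[of 1] by (simp add: c_def)
  moreover have "(G \<circ> square_rim) 0 = \<gamma>0 0" "(G \<circ> square_rim) 1 = \<gamma>1 0"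
    using left0[of 0] left1[of 0] by simp_all
  moreover have "(G \<circ> c) (t, 0) = id ((G \<circ> square_rim) t)" for t
    by (simp add: c_def)
  ultimately show ?thesis by blast
qed

lemma subdivided_vertex_chain:
  fixes K :: "'v set set" and \<delta> :: "real \<Rightarrow> 'v \<Rightarrow> real"
  assumes K: "simplicial_complex K" and XY: "X \<union> Y = vertices K"
    and a: "\<And>\<sigma>. \<sigma> \<in> crossing_edges K X Y \<Longrightarrow> a \<in> X \<inter> Y \<and> insert a \<sigma> \<in> K"
    and \<delta>: "pathin (realization_top K) \<delta>"
  obtains N vs ws where "0 < N"
    "\<And>i u. i < N \<Longrightarrow> real i \<le> real N * u \<Longrightarrow> real N * u \<le> real i + 1 \<Longrightarrow>
       {vs i, vs (Suc i)} \<subseteq> supp (\<delta> u)"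
    "\<And>i. ws (2 * i) = vs i"
    "\<And>i. i < N \<Longrightarrow> {ws (2 * i), ws (Suc (2 * i)), ws (Suc (Suc (2 * i)))} \<in> K"
    "\<And>j. j < 2 * N \<Longrightarrow> {ws j, ws (Suc j)} \<in> full_subcomplex K X \<union> full_subcomplex K Y"
proof -
  have "\<delta> u \<in> realization K" if "u \<in> {0..1}" for u
    using path_image_subset_topspace[OF \<delta>] that by (auto simp: topspace_realization_top)
  then have supp_K: "supp (\<delta> u) \<in> K" if "u \<in> {0..1}" for u
    using realization_supp(1)[OF K] that by blast
  have cont: "continuous_on {0..1} (\<lambda>u. \<delta> u v)" for v
    using continuous_map_realization_top_coordinate[of "top_of_set {0..1}" K \<delta> v] \<delta>
    unfolding pathin_def by simp
  have nz: "\<exists>v. \<delta> u v \<noteq> 0" if "u \<in> {0..1}" for u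
    using simplicial_complex_simplex[OF K supp_K[OF that]] unfolding supp_def by auto
  obtain N vs where N: "0 < N" and chain:
    "\<And>i u. i < N \<Longrightarrow> real i \<le> real N * u \<Longrightarrow> real N * u \<le> real i + 1 \<Longrightarrow>
       \<delta> u (vs i) \<noteq> 0 \<and> \<delta> u (vs (Suc i)) \<noteq> 0"
    using vertex_chain_along_path[OF cont nz] by blast
  have chain_supp: "{vs i, vs (Suc i)} \<subseteq> supp (\<delta> u)"
    if "i < N" "real i \<le> real N * u" "real N * u \<le> real i + 1" for i u
    using chain[OF that] unfolding supp_def by auto
  have edge: "{vs i, vs (Suc i)} \<in> K" if "i < N" for i
  proof -
    have "real i / real N \<in> {0..1}" "real i \<le> real N * (real i / real N)"
      "real N * (real i / real N) \<le> real i + 1"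
      using that N by auto
    then show ?thesis
      using simplicial_complex_face[OF K supp_K chain_supp[OF that]] by blast
  qed
  have "\<forall>i\<in>{..<N}. \<exists>c. {vs i, c, vs (Suc i)} \<in> K \<and>
      {vs i, c} \<in> full_subcomplex K X \<union> full_subcomplex K Y \<and>
      {c, vs (Suc i)} \<in> full_subcomplex K X \<union> full_subcomplex K Y"
  proof
    fix i
    assume "i \<in> {..<N}"
    then show "\<exists>c. {vs i, c, vs (Suc i)} \<in> K \<and>
        {vs i, c} \<in> full_subcomplex K X \<union> full_subcomplex K Y \<and>
        {c, vs (Suc i)} \<in> full_subcomplex K X \<union> full_subcomplex K Y"
      using subdivide_edge[OF K XY a edge] by (metis lessThan_iff)
  qed
  from bchoice[OF this] obtain c where c: "\<forall>i\<in>{..<N}. {vs i, c i, vs (Suc i)} \<in> K \<and>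
      {vs i, c i} \<in> full_subcomplex K X \<union> full_subcomplex K Y \<and>
      {c i, vs (Suc i)} \<in> full_subcomplex K X \<union> full_subcomplex K Y" ..
  define ws where "ws j = (if even j then vs (j div 2) else c (j div 2))" for j
  have ws: "ws (2 * i) = vs i" "ws (Suc (2 * i)) = c i" "ws (Suc (Suc (2 * i))) = vs (Suc i)" for i
    unfolding ws_def by auto
  show ?thesis
  proof (rule that[of N vs ws])
    show "0 < N" by (rule N)
    show "{vs i, vs (Suc i)} \<subseteq> supp (\<delta> u)"
      if "i < N" "real i \<le> real N * u" "real N * u \<le> real i + 1" for i u
      using chain_supp[OF that] .
    show "ws (2 * i) = vs i" for i by (rule ws(1))
    show "{ws (2 * i), ws (Suc (2 * i)), ws (Suc (Suc (2 * i)))} \<in> K" if "i < N" for i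
      using c that unfolding ws by auto
    show "{ws j, ws (Suc j)} \<in> full_subcomplex K X \<union> full_subcomplex K Y" if "j < 2 * N" for j
    proof -
      have "j div 2 < N" using that by auto
      moreover have "j = 2 * (j div 2) \<or> j = Suc (2 * (j div 2))" by presburger
      ultimately show ?thesis using c ws by (metis lessThan_iff)
    qed
  qed
qed

lemma two_stage_edge_homotopy_in_simplices:
  fixes \<delta> :: "real \<Rightarrow> 'v \<Rightarrow> real"
  assumes K: "simplicial_complex K" and \<delta>: "pathin (realization_top K) \<delta>" and N: "0 < N"
    and chain: "\<And>i u. i < N \<Longrightarrow> real i \<le> real N * u \<Longrightarrow> real N * u \<le> real i + 1 \<Longrightarrow>
       {vs i, vs (Suc i)} \<subseteq> supp (\<delta> u)"
    and ws: "\<And>i. ws (2 * i) = vs i"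
    and triangle: "\<And>i. i < N \<Longrightarrow> {ws (2 * i), ws (Suc (2 * i)), ws (Suc (Suc (2 * i)))} \<in> K"
  defines "G \<equiv> two_stage_homotopy \<delta> (edge_path N vs) (edge_path (2 * N) ws)"
  obtains F where "finite F" "F \<subseteq> K"
    "\<And>z. z \<in> {0..1} \<times> {0..1} \<Longrightarrow> \<exists>\<tau>\<in>F. G z \<in> closed_simplex \<tau>"
proof -
  define E where "E i = {ws (2 * i), ws (Suc (2 * i)), ws (Suc (Suc (2 * i)))}" for i
  define F where "F = supp ` \<delta> ` {0..1} \<union> E ` {..<N}"
  have \<delta>K: "\<delta> u \<in> realization K" if "u \<in> {0..1}" for u
    using path_image_subset_topspace[OF \<delta>] that by (auto simp: topspace_realization_top)
  have ws2: "ws (Suc (Suc (2 * i))) = vs (Suc i)" for i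
    using ws[of "Suc i"] by simp
  have "finite F"
    using finite_supp_compactin[OF K compactin_path_image[OF \<delta>]] unfolding F_def by blast
  moreover have "F \<subseteq> K"
    using realization_supp(1)[OF K \<delta>K] triangle unfolding F_def E_def by auto
  moreover have "\<exists>\<tau>\<in>F. G (s, u) \<in> closed_simplex \<tau>" if "s \<in> {0..1}" "u \<in> {0..1}" for s u
  proof -
    obtain i where i: "i < N" "real i \<le> real N * u" "real N * u \<le> real i + 1"
      using unit_interval_segment[OF N \<open>u \<in> {0..1}\<close>] .
    have "finite (supp (\<delta> u))"
      using simplicial_complex_finite[OF K realization_supp(1)[OF K \<delta>K[OF that(2)]]] .
    then have "edge_path N vs u \<in> closed_simplex (supp (\<delta> u))"
      using edge_path_in_closed_simplex[OF i] chain[OF i] by auto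
    moreover have "edge_path N vs u \<in> closed_simplex (E i)"
      by (rule edge_path_in_closed_simplex[OF i]) (auto simp: E_def ws ws2)
    moreover have "edge_path (2 * N) ws u \<in> closed_simplex (E i)"
      unfolding E_def by (rule edge_path_double_in_closed_simplex[OF i]) auto
    ultimately have "G (s, u) \<in> closed_simplex (supp (\<delta> u)) \<union> closed_simplex (E i)"
      unfolding G_def using that realization_supp(2)[OF K \<delta>K[OF that(2)]]
      by (intro two_stage_homotopy_in_closed_simplex)
    then show ?thesis using that i(1) unfolding F_def by auto
  qed
  ultimately show ?thesis by (intro that) auto
qed

lemma two_stage_edge_homotopy_sides:
  fixes \<delta> :: "real \<Rightarrow> 'v \<Rightarrow> real"
  assumes L: "simplicial_complex L" and ends: "\<delta> 0 \<in> realization L" "\<delta> 1 \<in> realization L"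
    and N: "0 < N" and vs: "vs 0 \<in> supp (\<delta> 0)" "vs N \<in> supp (\<delta> 1)"
    and ws: "\<And>i. ws (2 * i) = vs i"
    and edge: "\<And>j. j < 2 * N \<Longrightarrow> {ws j, ws (Suc j)} \<in> L"
  defines "G \<equiv> two_stage_homotopy \<delta> (edge_path N vs) (edge_path (2 * N) ws)"
  obtains FL where "finite FL" "FL \<subseteq> L"
    "\<And>z. z \<in> {0..1} \<times> {0..1} \<Longrightarrow> snd z = 0 \<or> fst z = 1 \<or> snd z = 1 \<Longrightarrow>
       \<exists>\<tau>\<in>FL. G z \<in> closed_simplex \<tau>"
proof -
  define FL where "FL = {supp (\<delta> 0), supp (\<delta> 1)} \<union> (\<lambda>j. {ws j, ws (Suc j)}) ` {..<2 * N}"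
  have end_face: "G (s, u) \<in> closed_simplex (supp (\<delta> u))"
    if "s \<in> {0..1}" "\<delta> u \<in> realization L" "edge_path N vs u = vertex_point v"
      "edge_path (2 * N) ws u = vertex_point v" "v \<in> supp (\<delta> u)" for s u v
    unfolding G_def
    using realization_supp[OF L \<open>\<delta> u \<in> realization L\<close>] that
    by (intro two_stage_homotopy_at_vertex) (auto intro: simplicial_complex_finite[OF L])
  have "finite FL" unfolding FL_def by simp
  moreover have "FL \<subseteq> L"
    using realization_supp(1)[OF L ends(1)] realization_supp(1)[OF L ends(2)] edge
    unfolding FL_def by auto
  moreover have "\<exists>\<tau>\<in>FL. G z \<in> closed_simplex \<tau>"
    if "z \<in> {0..1} \<times> {0..1}" "snd z = 0 \<or> fst z = 1 \<or> snd z = 1" for z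
  proof -
    obtain s u where "z = (s, u)" by (cases z)
    with that have z: "z = (s, u)" "s \<in> {0..1}" "u \<in> {0..1}" "u = 0 \<or> s = 1 \<or> u = 1" by auto
    consider "u = 0" | "s = 1" | "u = 1" using z(4) by blast
    then show ?thesis
    proof cases
      case 1
      have "G (s, 0) \<in> closed_simplex (supp (\<delta> 0))"
        using edge_path_start[OF N] edge_path_start[of "2 * N" ws] N ws[of 0] z(2) ends(1) vs(1)
        by (intro end_face) auto
      then show ?thesis using 1 z(1) unfolding FL_def by auto
    next
      case 2
      obtain j where j: "j < 2 * N" "real j \<le> real (2 * N) * u" "real (2 * N) * u \<le> real j + 1"
        using unit_interval_segment[of "2 * N" u] N z(3) by auto
      then have "G (1, u) \<in> closed_simplex {ws j, ws (Suc j)}"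
        unfolding G_def by (auto intro: edge_path_in_closed_simplex)
      then show ?thesis using 2 z(1) j(1) unfolding FL_def by auto
    next
      case 3
      have "G (s, 1) \<in> closed_simplex (supp (\<delta> 1))"
        using edge_path_end[OF N] edge_path_end[of "2 * N" ws] N ws[of N] z(2) ends(2) vs(2)
        by (intro end_face) auto
      then show ?thesis using 3 z(1) unfolding FL_def by auto
    qed
  qed
  ultimately show ?thesis by (intro that) auto
qed

lemma hofiber_points_joinable:
  fixes K :: "'v set set"
  assumes K: "simplicial_complex K" and XY: "X \<union> Y = vertices K"
    and a: "\<And>\<sigma>. \<sigma> \<in> crossing_edges K X Y \<Longrightarrow> a \<in> X \<inter> Y \<and> insert a \<sigma> \<in> K"
    and h0: "(z0, \<gamma>0) \<in> hofiber (realization_top (full_subcomplex K X \<union> full_subcomplex K Y))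
      (realization_top K) id w"
    and h1: "(z1, \<gamma>1) \<in> hofiber (realization_top (full_subcomplex K X \<union> full_subcomplex K Y))
      (realization_top K) id w"
  shows "\<exists>\<zeta> H. pathin (realization_top (full_subcomplex K X \<union> full_subcomplex K Y)) \<zeta> \<and>
           \<zeta> 0 = z0 \<and> \<zeta> 1 = z1 \<and>
           continuous_map (prod_topology (top_of_set {0..1}) (top_of_set {0..1})) (realization_top K) H \<and>
           (\<forall>s\<in>{0..1}. H (0, s) = \<gamma>0 s \<and> H (1, s) = \<gamma>1 s) \<and>
           (\<forall>t\<in>{0..1}. H (t, 0) = id (\<zeta> t) \<and> H (t, 1) = w)"
proof -
  define L where "L = full_subcomplex K X \<union> full_subcomplex K Y"
  have L: "simplicial_complex L"
    unfolding L_def using K by (intro simplicial_complex_Un simplicial_complex_full_subcomplex)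
  from h0 h1 have z: "z0 \<in> realization L" "z1 \<in> realization L"
    and \<gamma>: "pathin (realization_top K) \<gamma>0" "pathin (realization_top K) \<gamma>1"
    and ends: "\<gamma>0 0 = z0" "\<gamma>0 1 = w" "\<gamma>1 0 = z1" "\<gamma>1 1 = w"
    unfolding hofiber_def L_def by (auto simp: topspace_realization_top)
  define \<delta> where "\<delta> = \<gamma>0 +++ reversepath \<gamma>1"
  have \<delta>: "pathin (realization_top K) \<delta>"
    unfolding \<delta>_def using \<gamma> ends by (intro pathin_joinpaths pathin_reversepath) (auto simp: reversepath_def)
  have \<delta>_ends: "\<delta> 0 = z0" "\<delta> 1 = z1"
    unfolding \<delta>_def joinpaths_def reversepath_def using ends by auto
  have \<delta>_left: "\<delta> (s / 2) = \<gamma>0 s" "\<delta> (1 - s / 2) = \<gamma>1 s" if "s \<in> {0..1}" for s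
    unfolding \<delta>_def joinpaths_def reversepath_def using that ends by auto
  obtain N vs ws where N: "0 < N"
    and chain: "\<And>i u. i < N \<Longrightarrow> real i \<le> real N * u \<Longrightarrow> real N * u \<le> real i + 1 \<Longrightarrow>
       {vs i, vs (Suc i)} \<subseteq> supp (\<delta> u)"
    and ws: "\<And>i. ws (2 * i) = vs i"
    and triangle: "\<And>i. i < N \<Longrightarrow> {ws (2 * i), ws (Suc (2 * i)), ws (Suc (Suc (2 * i)))} \<in> K"
    and edge: "\<And>j. j < 2 * N \<Longrightarrow> {ws j, ws (Suc j)} \<in> L"
    using subdivided_vertex_chain[OF K XY a \<delta>] unfolding L_def by blast
  define G where "G = two_stage_homotopy \<delta> (edge_path N vs) (edge_path (2 * N) ws)"
  obtain F where F: "finite F" "F \<subseteq> K"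
      "\<And>z. z \<in> {0..1} \<times> {0..1} \<Longrightarrow> \<exists>\<tau>\<in>F. G z \<in> closed_simplex \<tau>"
    using two_stage_edge_homotopy_in_simplices[OF K \<delta> N chain ws triangle] unfolding G_def by blast
  have "vs 0 \<in> supp (\<delta> 0)" "vs N \<in> supp (\<delta> 1)"
    using chain[of 0 0] chain[of "N - 1" 1] N by (auto simp: of_nat_diff)
  then obtain FL where FL: "finite FL" "FL \<subseteq> L"
      "\<And>z. z \<in> {0..1} \<times> {0..1} \<Longrightarrow> snd z = 0 \<or> fst z = 1 \<or> snd z = 1 \<Longrightarrow>
         \<exists>\<tau>\<in>FL. G z \<in> closed_simplex \<tau>"
    using two_stage_edge_homotopy_sides[OF L _ _ N _ _ ws edge] z \<delta>_ends unfolding G_def by auto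
  have "continuous_on ({0..1} \<times> {0..1}) (\<lambda>z. G z x)" for x
  proof -
    have "continuous_on {0..1} (\<lambda>u. \<delta> u x)"
      using continuous_map_realization_top_coordinate[of "top_of_set {0..1}" K \<delta> x] \<delta>
      unfolding pathin_def by simp
    then show ?thesis
      unfolding G_def by (intro continuous_on_two_stage_homotopy continuous_intros)
  qed
  from homotopy_from_square[OF K L this F FL, of \<gamma>0 \<gamma>1]
  show ?thesis
    using \<delta>_left ends unfolding G_def L_def by simp
qed

lemma hofiber_id_nonempty:
  assumes K: "simplicial_complex K" and vertex: "\<And>v. {v} \<in> K \<Longrightarrow> {v} \<in> L"
    and w: "w \<in> topspace (realization_top K)"
  shows "hofiber (realization_top L) (realization_top K) id w \<noteq> {}"
proof -
  have "w \<in> realization K" using w by (simp add: topspace_realization_top)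
  then have sw: "supp w \<in> K" "w \<in> closed_simplex (supp w)" using realization_supp[OF K] by auto
  then obtain v where v: "v \<in> supp w" using simplicial_complex_simplex[OF K] by blast
  have fin: "finite (supp w)" using simplicial_complex_finite[OF K sw(1)] .
  have "{v} \<in> K" using simplicial_complex_face[OF K sw(1), of "{v}"] v by auto
  then have "vertex_point v \<in> realization L"
    using vertex vertex_point_in_closed_simplex[of "{v}" v] unfolding realization_def by auto
  define g where "g s = convex_comb s (vertex_point v) w" for s
  have "pathin (realization_top K) g"
    unfolding pathin_def
  proof (rule continuous_map_into_realization_top[OF K, of "{supp w}"])
    fix x
    show "continuous_map (top_of_set {0..1}) euclideanreal (\<lambda>s. g s x)"
      unfolding g_def by (simp add: continuous_intros)
  next
    fix s
    assume "s \<in> topspace (top_of_set {0..1::real})"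
    then show "\<exists>\<tau>\<in>{supp w}. g s \<in> closed_simplex \<tau>"
      unfolding g_def using closed_simplex_convex_comb[OF vertex_point_in_closed_simplex[OF fin v] sw(2)]
      by auto
  qed (use sw in auto)
  moreover have "g 0 = vertex_point v" "g 1 = w" unfolding g_def by auto
  ultimately have "(vertex_point v, g) \<in> hofiber (realization_top L) (realization_top K) id w"
    unfolding hofiber_def using \<open>vertex_point v \<in> realization L\<close> by (simp add: topspace_realization_top)
  then show ?thesis by blast
qed

theorem proposition8p1:
  fixes K :: "'v set set" and X Y :: "'v set"
  assumes "simplicial_complex K"
    and "X \<union> Y = vertices K"
    and "(\<Inter>\<sigma>\<in>edges K - {\<sigma>\<in>K. \<sigma> \<subseteq> X \<or> \<sigma> \<subseteq> Y \<or> \<sigma> \<inter> (X \<inter> Y) \<noteq> {}}.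
            St K \<sigma> (X \<inter> Y)) \<noteq> {}"
  shows "\<forall>w\<in>topspace (realization_top K).
           hofiber_connected (realization_top (full_subcomplex K X \<union> full_subcomplex K Y))
             (realization_top K) id w"
proof -
  obtain a where a: "\<And>\<sigma>. \<sigma> \<in> crossing_edges K X Y \<Longrightarrow> a \<in> X \<inter> Y \<and> insert a \<sigma> \<in> K"
    using common_star_vertex[OF assms(1) assms(3)[unfolded crossing_edges_eq]] by blast
  have vertex: "{v} \<in> full_subcomplex K X \<union> full_subcomplex K Y" if "{v} \<in> K" for v
    using that assms(2) unfolding vertices_def full_subcomplex_def by auto
  show ?thesis
    unfolding hofiber_connected_def
    using hofiber_id_nonempty[OF assms(1) vertex] hofiber_points_joinable[OF assms(1,2) a]
    by blast
qed

end
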